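(* Let $A$ be an Arens regular Banach algebra and let $(\pi_1,X,\pi_2)$ be a Banach $A$-module. Then $(\pi_2^{**},X^*,\pi_1^{r**r})$ is a Banach $A^{**}$-module (with left action $\pi_2^{**}:A^{**}\times X^*\to X^*$ and right action $\pi_1^{r**r}:X^*\times A^{**}\to X^*$) if and only if, for every $x\in X$, the bilinear map $$\theta_x:A\times A\to X,\qquad \theta_x(a,b)=\pi_1(a,\pi_2(x,b))=\pi_2(\pi_1(a,x),b)$$ is Arens regular.
   Context: Normed spaces are identified with their canonical images in their second duals. For a bounded bilinear map $f:X\times Y\to Z$, the adjoint $f^*:Z^*\times X\to Y^*$ is defined by $\langle f^*(z^*,x),y\rangle=\langle z^*,f(x,y)\rangle$; iterating gives $f^{**}=(f^* )^*:Y^{**}\times Z^*\to X^*$, $f^{***}:X^{**}\times Y^{**}\to Z^{**}$, etc. The flip is $f^r(y,x)=f(x,y)$; superscripts are applied successively left to right (e.g. $\pi_1^{r**r}$: flip $\pi_1$, take two adjoints, flip). $f$ is Arens regular if $f^{***}=f^{r***r}$. A Banach algebra $A$ with multiplication $\pi$ is Arens regular if $\pi$ is, in which case $A^{**}$ carries the single Arens product $\pi^{***}=\pi^{r***r}$. A Banach $A$-module $(\pi_1,X,\pi_2)$ consists of a Banach space $X$ and bounded bilinear maps $\pi_1:A\times X\to X$, $\pi_2:X\times A\to X$ with $\pi_1(ab,x)=\pi_1(a,\pi_1(b,x))$, $\pi_2(x,ab)=\pi_2(\pi_2(x,a),b)$, $\pi_1(a,\pi_2(x,b))=\pi_2(\pi_1(a,x),b)$;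 a Banach $A^{**}$-module is defined analogously with $A^{**}$ in place of $A$. *)

theory Defs
  imports "HOL-Analysis.Analysis"
begin

text \<open>Duals are real dual spaces X* = (X \<Rightarrow>L real). Bilinear maps are curried.\<close>

definition adj ::
  "('x::real_normed_vector \<Rightarrow> 'y::real_normed_vector \<Rightarrow> 'z::real_normed_vector)
     \<Rightarrow> ('z \<Rightarrow>\<^sub>L real) \<Rightarrow> 'x \<Rightarrow> ('y \<Rightarrow>\<^sub>L real)" where
  "adj f = (\<lambda>zs x. Blinfun (\<lambda>y. blinfun_apply zs (f x y)))"

definition bflip :: "('x \<Rightarrow> 'y \<Rightarrow> 'z) \<Rightarrow> 'y \<Rightarrow> 'x \<Rightarrow> 'z" where
  "bflip f = (\<lambda>y x. f x y)"

definition adj3 ::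
  "('x::real_normed_vector \<Rightarrow> 'y::real_normed_vector \<Rightarrow> 'z::real_normed_vector)
     \<Rightarrow> (('x \<Rightarrow>\<^sub>L real) \<Rightarrow>\<^sub>L real) \<Rightarrow> (('y \<Rightarrow>\<^sub>L real) \<Rightarrow>\<^sub>L real)
     \<Rightarrow> (('z \<Rightarrow>\<^sub>L real) \<Rightarrow>\<^sub>L real)" where
  "adj3 f = adj (adj (adj f))"

definition arens_regular ::
  "('x::real_normed_vector \<Rightarrow> 'y::real_normed_vector \<Rightarrow> 'z::real_normed_vector) \<Rightarrow> bool" where
  "arens_regular f \<longleftrightarrow> adj3 f = bflip (adj3 (bflip f))"

definition banach_algebra_mult :: "('a::banach \<Rightarrow> 'a \<Rightarrow> 'a) \<Rightarrow> bool" where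
  "banach_algebra_mult m \<longleftrightarrow> bounded_bilinear m \<and> (\<forall>a b c. m (m a b) c = m a (m b c))"

definition banach_module ::
  "('a::real_normed_vector \<Rightarrow> 'a \<Rightarrow> 'a) \<Rightarrow> ('a \<Rightarrow> 'x::banach \<Rightarrow> 'x) \<Rightarrow> ('x \<Rightarrow> 'a \<Rightarrow> 'x) \<Rightarrow> bool" where
  "banach_module m l r \<longleftrightarrow> bounded_bilinear l \<and> bounded_bilinear r \<and>
     (\<forall>a b x. l (m a b) x = l a (l b x)) \<and>
     (\<forall>a b x. r x (m a b) = r (r x a) b) \<and>
     (\<forall>a b x. l a (r x b) = r (l a x) b)"

end

theory Submission
  imports Defs
begin

text \<open>Both module identities for the dual actions on \<open>X*\<close> reduce, by evaluating the iterated
  adjoints at elements of \<open>A**\<close>, \<open>X*\<close> and \<open>X\<close>, to the module identities on \<open>X\<close>. The left action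
  \<open>\<pi>2**\<close> is associative for the first Arens product, and so is the flipped right action for the
  second Arens product of the opposite multiplication; Arens regularity of \<open>A\<close> makes the two
  products agree. What remains is that the two dual actions commute, and evaluating both sides
  at \<open>x \<in> X\<close> identifies them with \<open>\<theta>\<^sub>x\<^sup>r\<^sup>*\<^sup>*\<^sup>*\<^sup>r\<close> and \<open>\<theta>\<^sub>x\<^sup>*\<^sup>*\<^sup>*\<close>.\<close>

lemma adj_apply:
  assumes "bounded_bilinear f"
  shows "blinfun_apply (adj f zs x) y = blinfun_apply zs (f x y)"
proof -
  have "bounded_linear (\<lambda>y. blinfun_apply zs (f x y))"
    using bounded_linear_compose[OF blinfun.bounded_linear_right
        bounded_bilinear.bounded_linear_right[OF assms]] .
  then show ?thesis
    unfolding adj_def by (simp add: bounded_linear_Blinfun_apply)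
qed

lemma bounded_bilinear_adj:
  assumes f: "bounded_bilinear f"
  shows "bounded_bilinear (adj f)"
proof
  fix a a' b b' and r :: real
  show "adj f (a + a') b = adj f a b + adj f a' b"
    by (rule blinfun_eqI) (simp add: adj_apply[OF f] blinfun.add_left)
  show "adj f a (b + b') = adj f a b + adj f a b'"
    by (rule blinfun_eqI)
      (simp add: adj_apply[OF f] bounded_bilinear.add_left[OF f] blinfun.add_right blinfun.add_left)
  show "adj f (r *\<^sub>R a) b = r *\<^sub>R adj f a b"
    by (rule blinfun_eqI) (simp add: adj_apply[OF f] blinfun.scaleR_left)
  show "adj f a (r *\<^sub>R b) = r *\<^sub>R adj f a b"
    by (rule blinfun_eqI)
      (simp add: adj_apply[OF f] bounded_bilinear.scaleR_left[OF f] blinfun.scaleR_right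
        blinfun.scaleR_left)
next
  obtain K where K: "K \<ge> 0" "\<And>a b. norm (f a b) \<le> norm a * norm b * K"
    using bounded_bilinear.nonneg_bounded[OF f] by blast
  show "\<exists>K. \<forall>a b. norm (adj f a b) \<le> norm a * norm b * K"
  proof (intro exI allI)
    fix zs x
    show "norm (adj f zs x) \<le> norm zs * norm x * K"
    proof (rule norm_blinfun_bound)
      show "0 \<le> norm zs * norm x * K"
        using K by simp
      fix y
      have "norm (blinfun_apply zs (f x y)) \<le> norm zs * norm (f x y)"
        by (rule norm_blinfun)
      also have "\<dots> \<le> norm zs * (norm x * norm y * K)"
        by (rule mult_left_mono[OF K(2)]) simp
      finally show "norm (blinfun_apply (adj f zs x) y) \<le> norm zs * norm x * K * norm y"
        by (simp add: adj_apply[OF f] mult_ac)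
    qed
  qed
qed

lemma bflip_apply: "bflip f y x = f x y"
  by (simp add: bflip_def)

lemma bounded_bilinear_bflip: "bounded_bilinear f \<Longrightarrow> bounded_bilinear (bflip f)"
  unfolding bflip_def by (rule bounded_bilinear.flip)

lemma blinfun_eq_iff: "P = Q \<longleftrightarrow> (\<forall>y. blinfun_apply P y = blinfun_apply Q y)"
  by (auto intro: blinfun_eqI)

lemma blinfun_apply_cong:
  "(\<And>y. blinfun_apply P y = blinfun_apply Q y) \<Longrightarrow> blinfun_apply m P = blinfun_apply m Q"
  by (metis blinfun_eqI)

lemmas adj_simps = adj_apply bounded_bilinear_adj bounded_bilinear_bflip

lemma adj2_right_action_assoc:
  assumes m: "bounded_bilinear m" and r: "bounded_bilinear r"
    and assoc: "\<And>x a b. r x (m a b) = r (r x a) b"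
  shows "adj (adj r) (adj3 m P Q) f = adj (adj r) P (adj (adj r) Q f)"
  apply (rule blinfun_eqI)
  apply (simp add: adj_simps m r adj3_def)
  apply (rule blinfun_apply_cong, simp add: adj_simps m r)
  apply (rule blinfun_apply_cong, simp add: adj_simps m r assoc)
  done

lemma bflip_left_action_right_assoc:
  assumes "\<And>a b x. l (m a b) x = l a (l b x)"
  shows "bflip l x (bflip m a b) = bflip l (bflip l x a) b"
  using assms by (simp add: bflip_apply)

lemma adj2_actions_commute_iff:
  fixes l :: "'a::real_normed_vector \<Rightarrow> 'x::real_normed_vector \<Rightarrow> 'x"
    and r :: "'x \<Rightarrow> 'a \<Rightarrow> 'x"
  assumes l: "bounded_bilinear l" and r: "bounded_bilinear r"
    and comm: "\<And>a b x. l a (r x b) = r (l a x) b"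
  shows "(\<forall>P Q f. adj (adj r) P (bflip (adj (adj (bflip l))) f Q)
            = bflip (adj (adj (bflip l))) (adj (adj r) P f) Q)
     \<longleftrightarrow> (\<forall>x. arens_regular (\<lambda>a b. l a (r x b)))"
    (is "(\<forall>P Q f. ?L P (?R f Q) = ?R (?L P f) Q) \<longleftrightarrow> _")
proof -
  define \<theta> where "\<theta> = (\<lambda>x a b. l a (r x b))"
  have \<theta>_apply: "\<theta> x a b = l a (r x b)" for x a b
    by (simp add: \<theta>_def)
  have \<theta>: "bounded_bilinear (\<theta> x)" for x
    using bounded_bilinear.comp[OF l bounded_linear_ident bounded_bilinear.bounded_linear_right[OF r]]
    by (simp add: \<theta>_def)
  \<comment> \<open>\<open>bflip_apply\<close> also rewrites an unapplied \<open>bflip l\<close> to \<open>\<lambda>a b. l b a\<close>, hence the flipped fact\<close>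
  note simps = adj_simps bflip_apply l r bounded_bilinear.flip[OF l] \<theta> \<theta>_apply
  have left_right: "blinfun_apply (?L P (?R f Q)) x = blinfun_apply (adj3 (bflip (\<theta> x)) P Q) f"
    for P Q f x
    apply (simp add: simps adj3_def)
    apply (rule blinfun_apply_cong, simp add: simps)
    apply (rule blinfun_apply_cong, simp add: simps comm)
    done
  have right_left: "blinfun_apply (?R (?L P f) Q) x = blinfun_apply (adj3 (\<theta> x) Q P) f"
    for P Q f x
    apply (simp add: simps adj3_def)
    apply (rule blinfun_apply_cong, simp add: simps)
    apply (rule blinfun_apply_cong, simp add: simps comm)
    done
  have "(\<forall>P Q f. ?L P (?R f Q) = ?R (?L P f) Q)
      \<longleftrightarrow> (\<forall>P Q f x. blinfun_apply (adj3 (bflip (\<theta> x)) P Q) f = blinfun_apply (adj3 (\<theta> x) Q P) f)"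
    unfolding blinfun_eq_iff left_right right_left by blast
  also have "\<dots> \<longleftrightarrow> (\<forall>x. arens_regular (\<theta> x))"
    by (auto simp: arens_regular_def fun_eq_iff blinfun_eq_iff bflip_apply)
  finally show ?thesis
    by (simp add: \<theta>_def)
qed

theorem proposition3p3:
  fixes \<pi> :: "'a::banach \<Rightarrow> 'a \<Rightarrow> 'a"
    and \<pi>1 :: "'a \<Rightarrow> 'x::banach \<Rightarrow> 'x"
    and \<pi>2 :: "'x \<Rightarrow> 'a \<Rightarrow> 'x"
  assumes "banach_algebra_mult \<pi>"
    and "arens_regular \<pi>"
    and "banach_module \<pi> \<pi>1 \<pi>2"
  shows "banach_module (adj3 \<pi>) (adj (adj \<pi>2)) (bflip (adj (adj (bflip \<pi>1))))
     \<longleftrightarrow> (\<forall>x. arens_regular (\<lambda>a b. \<pi>1 a (\<pi>2 x b)))"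
proof -
  have \<pi>: "bounded_bilinear \<pi>"
    using assms(1) by (simp add: banach_algebra_mult_def)
  have \<pi>1: "bounded_bilinear \<pi>1" and \<pi>2: "bounded_bilinear \<pi>2"
    and left: "\<And>a b x. \<pi>1 (\<pi> a b) x = \<pi>1 a (\<pi>1 b x)"
    and right: "\<And>a b x. \<pi>2 x (\<pi> a b) = \<pi>2 (\<pi>2 x a) b"
    and comm: "\<And>a b x. \<pi>1 a (\<pi>2 x b) = \<pi>2 (\<pi>1 a x) b"
    using assms(3) unfolding banach_module_def by auto
  have regular: "adj3 \<pi> P Q = adj3 (bflip \<pi>) Q P" for P Q
    using assms(2) unfolding arens_regular_def by (metis bflip_apply)
  have left_assoc: "adj (adj \<pi>2) (adj3 \<pi> P Q) f = adj (adj \<pi>2) P (adj (adj \<pi>2) Q f)" for P Q f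
    by (rule adj2_right_action_assoc[of \<pi> \<pi>2, OF \<pi> \<pi>2 right])
  have right_assoc: "adj (adj (bflip \<pi>1)) (adj3 \<pi> P Q) f
      = adj (adj (bflip \<pi>1)) Q (adj (adj (bflip \<pi>1)) P f)" for P Q f
    unfolding regular
    by (rule adj2_right_action_assoc[of "bflip \<pi>" "bflip \<pi>1",
          OF bounded_bilinear_bflip[OF \<pi>] bounded_bilinear_bflip[OF \<pi>1]
          bflip_left_action_right_assoc[of \<pi>1 \<pi>, OF left]])
  show ?thesis
    unfolding banach_module_def adj2_actions_commute_iff[of \<pi>1 \<pi>2, OF \<pi>1 \<pi>2 comm, symmetric]
    using left_assoc right_assoc \<pi>1 \<pi>2 by (simp add: adj_simps bflip_apply)
qed

end
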